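(* Let $n,m$ be positive integers and $R_1,\dots,R_n:\{0,\dots,m\}\to\mathbb{R}$ arbitrary functions with $R_j(0)=0$. Let $0\le k<nm$ and let $\mathbf{x}$ be an optimal $k$-profile. Then there exists an optimal $(k+1)$-profile $\mathbf{y}$ such that $\mathrm{diff}(\mathbf{x},\mathbf{y})$ is irreducible.
   Context: A $k$-profile is a vector $\mathbf{x}=(x_1,\dots,x_n)$ with $x_j\in\{0,\dots,m\}$ and $\sum_j x_j=k$; it is optimal if its revenue $\sum_j R_j(x_j)$ is maximum among all $k$-profiles. For a $k$-profile $\mathbf{x}$ and a $(k+1)$-profile $\mathbf{y}$, $\mathrm{diff}(\mathbf{x},\mathbf{y})=(A,B)$ where $A$ is the multiset $\{y_i-x_i: i\in[n],\ y_i>x_i\}$ and $B$ is the multiset $\{x_i-y_i: i\in[n],\ x_i>y_i\}$ (both multisets of elements of $\{1,\dots,m\}$). A pair of multisets $(A,B)$ is reducible if the sum of some nonempty sub-multiset of $A$ equals the sum of some nonempty sub-multiset of $B$, and irreducible otherwise. *)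

theory Defs
  imports Complex_Main "HOL-Library.Multiset"
begin

text \<open>Indices are 0..n-1. A k-profile is a function nat => nat, zero outside
  the index range, with values in 0..m and summing to k.\<close>

definition profile :: "nat \<Rightarrow> nat \<Rightarrow> nat \<Rightarrow> (nat \<Rightarrow> nat) \<Rightarrow> bool" where
  "profile n m k x \<longleftrightarrow> (\<forall>j<n. x j \<le> m) \<and> (\<forall>j\<ge>n. x j = 0) \<and> (\<Sum>j<n. x j) = k"

definition revenue :: "nat \<Rightarrow> (nat \<Rightarrow> nat \<Rightarrow> real) \<Rightarrow> (nat \<Rightarrow> nat) \<Rightarrow> real" where
  "revenue n R x = (\<Sum>j<n. R j (x j))"

definition optimal_profile :: "nat \<Rightarrow> nat \<Rightarrow> (nat \<Rightarrow> nat \<Rightarrow> real) \<Rightarrow> nat \<Rightarrow> (nat \<Rightarrow> nat) \<Rightarrow> bool" where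
  "optimal_profile n m R k x \<longleftrightarrow> profile n m k x \<and>
     (\<forall>z. profile n m k z \<longrightarrow> revenue n R z \<le> revenue n R x)"

definition diffA :: "nat \<Rightarrow> (nat \<Rightarrow> nat) \<Rightarrow> (nat \<Rightarrow> nat) \<Rightarrow> nat multiset" where
  "diffA n x y = image_mset (\<lambda>i. y i - x i) (filter_mset (\<lambda>i. y i > x i) (mset_set {..<n}))"

definition diffB :: "nat \<Rightarrow> (nat \<Rightarrow> nat) \<Rightarrow> (nat \<Rightarrow> nat) \<Rightarrow> nat multiset" where
  "diffB n x y = image_mset (\<lambda>i. x i - y i) (filter_mset (\<lambda>i. x i > y i) (mset_set {..<n}))"

definition reducible :: "nat multiset \<Rightarrow> nat multiset \<Rightarrow> bool" where
  "reducible A B \<longleftrightarrow> (\<exists>A' B'. A' \<subseteq># A \<and> B' \<subseteq># B \<and> A' \<noteq> {#} \<and> B' \<noteq> {#}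
      \<and> sum_mset A' = sum_mset B')"

definition irreducible_pair :: "nat multiset \<Rightarrow> nat multiset \<Rightarrow> bool" where
  "irreducible_pair A B \<longleftrightarrow> \<not> reducible A B"

end

(* Among the optimal (k+1)-profiles choose y closest to x in l1 distance. If diff(x, y) were
   reducible, there would be index sets I (where y exceeds x), I nonempty, and J (where x exceeds y)
   on whose union K the profiles x and y have the same total. Exchanging the coordinates of x and y
   on K gives a (k+1)-profile z and a k-profile w with R(z) + R(w) = R(x) + R(y); optimality of x
   makes z optimal, yet z is strictly closer to x than y. *)

theory Submission
  imports Defs
begin

lemma subset_mset_mset_setE:
  assumes "M \<subseteq># mset_set S" "finite S"
  obtains T where "T \<subseteq> S" "M = mset_set T"
proof
  show "set_mset M \<subseteq> S"
    using assms by (metis elem_mset_set mset_subset_eqD subsetI)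
  have "count M a \<le> 1" for a
    using assms(1) mset_subset_eq_count[of M "mset_set S" a]
    by (auto simp: count_mset_set' split: if_splits)
  then show "M = mset_set (set_mset M)"
    by (intro multiset_eqI)
      (metis count_eq_zero_iff count_mset_set(1,3) finite_set_mset le_antisym less_one not_le)
qed

lemma subset_image_mset_mset_setE:
  assumes "A \<subseteq># image_mset f (mset_set S)" "finite S"
  obtains T where "T \<subseteq> S" "A = image_mset f (mset_set T)"
proof -
  obtain C where "image_mset f (mset_set S) = A + C"
    using assms(1) by (auto simp: subset_mset.le_iff_add)
  then obtain A' C' where "mset_set S = A' + C'" "A = image_mset f A'"
    by (auto dest: image_mset_eq_plusD)
  moreover obtain T where "T \<subseteq> S" "A' = mset_set T"
    using subset_mset_mset_setE[of A' S] \<open>mset_set S = A' + C'\<close> assms(2) by auto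
  ultimately show thesis using that by blast
qed

lemma diffA_mset_set: "diffA n x y = image_mset (\<lambda>i. y i - x i) (mset_set {i \<in> {..<n}. x i < y i})"
  by (simp add: diffA_def)

lemma diffB_mset_set: "diffB n x y = image_mset (\<lambda>i. x i - y i) (mset_set {i \<in> {..<n}. y i < x i})"
  by (simp add: diffB_def)

lemma sum_eq_if_sum_diff_eq:
  fixes x y :: "'a \<Rightarrow> nat"
  assumes "finite I" "finite J" "I \<inter> J = {}"
    and "\<And>i. i \<in> I \<Longrightarrow> x i \<le> y i" "\<And>j. j \<in> J \<Longrightarrow> y j \<le> x j"
    and "(\<Sum>i\<in>I. y i - x i) = (\<Sum>j\<in>J. x j - y j)"
  shows "(\<Sum>j\<in>I \<union> J. x j) = (\<Sum>j\<in>I \<union> J. y j)"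
proof -
  have "(\<Sum>i\<in>I. y i) - (\<Sum>i\<in>I. x i) = (\<Sum>j\<in>J. x j) - (\<Sum>j\<in>J. y j)"
    using assms(4-6) by (simp add: sum_subtractf_nat)
  moreover have "(\<Sum>i\<in>I. x i) \<le> (\<Sum>i\<in>I. y i)" "(\<Sum>j\<in>J. y j) \<le> (\<Sum>j\<in>J. x j)"
    using assms(4,5) by (auto intro: sum_mono)
  ultimately show ?thesis
    using assms(1-3) by (simp add: sum.union_disjoint)
qed

lemma reducible_diffE:
  assumes "reducible (diffA n x y) (diffB n x y)"
  obtains K where "K \<subseteq> {..<n}" "\<exists>i\<in>K. x i \<noteq> y i" "(\<Sum>j\<in>K. x j) = (\<Sum>j\<in>K. y j)"
proof -
  obtain A B where AB: "A \<subseteq># diffA n x y" "B \<subseteq># diffB n x y" "A \<noteq> {#}"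
      "sum_mset A = sum_mset B"
    using assms unfolding reducible_def by blast
  obtain I where I: "I \<subseteq> {i \<in> {..<n}. x i < y i}" "A = image_mset (\<lambda>i. y i - x i) (mset_set I)"
    by (rule subset_image_mset_mset_setE[OF AB(1)[unfolded diffA_mset_set]]) auto
  obtain J where J: "J \<subseteq> {i \<in> {..<n}. y i < x i}" "B = image_mset (\<lambda>i. x i - y i) (mset_set J)"
    by (rule subset_image_mset_mset_setE[OF AB(2)[unfolded diffB_mset_set]]) auto
  have fin: "finite I" "finite J"
    using I(1) J(1) by (auto intro: finite_subset)
  show thesis
  proof
    show "I \<union> J \<subseteq> {..<n}"
      using I(1) J(1) by blast
    have "I \<noteq> {}"
      using AB(3) I(2) by auto
    then show "\<exists>i\<in>I \<union> J. x i \<noteq> y i"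
      using I(1) by force
    have "(\<Sum>i\<in>I. y i - x i) = (\<Sum>j\<in>J. x j - y j)"
      using AB(4) I(2) J(2) by (simp add: sum_unfold_sum_mset)
    then show "(\<Sum>j\<in>I \<union> J. x j) = (\<Sum>j\<in>I \<union> J. y j)"
      using I(1) J(1) fin by (intro sum_eq_if_sum_diff_eq) fastforce+
  qed
qed

lemma profile_exists:
  assumes "k \<le> n * m"
  shows "\<exists>x. profile n m k x"
  using assms
proof (induction k)
  case 0
  show ?case
    by (auto simp: profile_def intro!: exI[of _ "\<lambda>_. 0"])
next
  case (Suc k)
  then obtain x where x: "profile n m k x"
    by auto
  have "\<not> (\<forall>j<n. m \<le> x j)"
  proof
    assume "\<forall>j<n. m \<le> x j"
    then have "n * m \<le> (\<Sum>j<n. x j)"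
      using sum_mono[of "{..<n}" "\<lambda>_. m" x] by simp
    then show False
      using x Suc.prems by (simp add: profile_def)
  qed
  then obtain j where "j < n" "x j < m"
    by auto
  then have "profile n m (Suc k) (\<lambda>i. x i + (if i = j then 1 else 0))"
    using x by (auto simp: profile_def sum.distrib)
  then show ?case
    by blast
qed

lemma finite_profiles: "finite {x. profile n m k x}"
  by (rule finite_subset[OF _ finite_set_of_finite_funs[of "{..<n}" "{0..m}" 0]])
    (auto simp: profile_def)

lemma optimal_profile_exists:
  assumes "k \<le> n * m"
  shows "\<exists>x. optimal_profile n m R k x"
proof -
  let ?P = "{x. profile n m k x}"
  have fin: "finite (revenue n R ` ?P)" and "?P \<noteq> {}"
    using finite_profiles profile_exists[OF assms] by auto
  then obtain x where "x \<in> ?P" "revenue n R x = Max (revenue n R ` ?P)"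
    by (metis (no_types, lifting) Max_in image_iff image_is_empty)
  then show ?thesis
    using fin by (auto simp: optimal_profile_def)
qed

lemma profile_swap:
  assumes "profile n m k x" "profile n m l y" "K \<subseteq> {..<n}" "(\<Sum>j\<in>K. x j) = (\<Sum>j\<in>K. y j)"
  shows "profile n m l (\<lambda>j. if j \<in> K then x j else y j)"
proof -
  have "(\<Sum>j<n. if j \<in> K then x j else y j) = (\<Sum>j\<in>K. x j) + (\<Sum>j\<in>{..<n} - K. y j)"
    using assms(3) by (simp add: sum.If_cases Int_absorb1 Diff_eq)
  also have "\<dots> = (\<Sum>j<n. y j)"
    using assms(3,4) by (simp add: sum.subset_diff[of K])
  finally show ?thesis
    using assms(1-3) by (auto simp: profile_def)
qed

lemma revenue_swap:
  "revenue n R (\<lambda>j. if j \<in> K then x j else y j) + revenue n R (\<lambda>j. if j \<in> K then y j else x j)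
    = revenue n R x + revenue n R y"
  unfolding revenue_def sum.distrib[symmetric] by (intro sum.cong) auto

lemma optimal_profile_swap:
  assumes x: "optimal_profile n m R k x" and y: "optimal_profile n m R l y"
    and K: "K \<subseteq> {..<n}" "(\<Sum>j\<in>K. x j) = (\<Sum>j\<in>K. y j)"
  shows "optimal_profile n m R l (\<lambda>j. if j \<in> K then x j else y j)"
proof -
  have "profile n m l (\<lambda>j. if j \<in> K then x j else y j)"
    and "profile n m k (\<lambda>j. if j \<in> K then y j else x j)"
    using x y K profile_swap by (auto simp: optimal_profile_def)
  then have "revenue n R (\<lambda>j. if j \<in> K then y j else x j) \<le> revenue n R x"
    using x by (simp add: optimal_profile_def)
  with y \<open>profile n m l _\<close> show ?thesis
    using revenue_swap[of n R K x y] by (auto simp: optimal_profile_def)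
qed

definition l1_dist :: "nat \<Rightarrow> (nat \<Rightarrow> nat) \<Rightarrow> (nat \<Rightarrow> nat) \<Rightarrow> nat" where
  "l1_dist n x y = (\<Sum>j<n. (x j - y j) + (y j - x j))"

lemma l1_dist_swap_less:
  assumes "K \<subseteq> {..<n}" "i \<in> K" "x i \<noteq> y i"
  shows "l1_dist n x (\<lambda>j. if j \<in> K then x j else y j) < l1_dist n x y"
  unfolding l1_dist_def using assms
  by (intro sum_strict_mono_ex1) (auto simp: subset_iff linorder_neq_iff intro!: bexI[of _ i])

theorem lemma3:
  fixes n m k :: nat and R :: "nat \<Rightarrow> nat \<Rightarrow> real" and x :: "nat \<Rightarrow> nat"
  assumes "n > 0" and "m > 0"
    and "\<forall>j<n. R j 0 = 0"
    and "k < n * m"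
    and "optimal_profile n m R k x"
  shows "\<exists>y. optimal_profile n m R (k + 1) y \<and> irreducible_pair (diffA n x y) (diffB n x y)"
proof -
  obtain y where y: "optimal_profile n m R (k + 1) y"
    and closest: "\<And>z. optimal_profile n m R (k + 1) z \<Longrightarrow> l1_dist n x y \<le> l1_dist n x z"
    using optimal_profile_exists[of "k + 1" n m R] assms(4)
      ex_has_least_nat[of "optimal_profile n m R (k + 1)" _ "l1_dist n x"] by auto
  have "\<not> reducible (diffA n x y) (diffB n x y)"
  proof
    assume "reducible (diffA n x y) (diffB n x y)"
    then obtain K i where K: "K \<subseteq> {..<n}" "(\<Sum>j\<in>K. x j) = (\<Sum>j\<in>K. y j)"
      and "i \<in> K" "x i \<noteq> y i"
      by (rule reducible_diffE) blast
    then have "optimal_profile n m R (k + 1) (\<lambda>j. if j \<in> K then x j else y j)"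
      using optimal_profile_swap[OF assms(5) y] by blast
    with l1_dist_swap_less[of K n i x y] K(1) \<open>i \<in> K\<close> \<open>x i \<noteq> y i\<close> show False
      using closest by (meson not_le)
  qed
  with y show ?thesis
    by (auto simp: irreducible_pair_def)
qed

end
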